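(* Let $\Omega\subseteq\mathbb{C}^n$ be a bounded connected Reinhardt domain which is feasible with respect to an admissible multi-radial weight $\omega$, and let $\Lambda=\Lambda(\Omega,\omega,2)$. Let $u\in\mathcal{D}'(\mathbb{T}^n)$ be such that $(\hat u(\alpha))_{\alpha\in\Lambda}\in\ell^\infty(\Lambda)$. If a function $g$ on $\Omega$ is induced by $u$, then $g$ is analytic on $\Omega$.
   Context: A Reinhardt domain is an open $\Omega\subseteq\mathbb{C}^n$ with $\lambda z:=(\lambda_1z_1,\dots,\lambda_nz_n)\in\Omega$ for $z\in\Omega$, $\lambda\in\mathbb{T}^n$; its Reinhardt shadow is $|\Omega|=\{(|z_1|,\dots,|z_n|):z\in\Omega\}$. A weight $\omega$ is multi-radial if measurable, positive a.e., and $\omega(z)=a(|z_1|,\dots,|z_n|)$; admissible if for each compact $K\subset\Omega$ there is $C_K$ with $\sup_K|f|\le C_K\|f\|_{2,\omega}$ for all $f\in A^2(\Omega,\omega)$ (holomorphic functions in $L^2(\Omega,\omega\,dV)$). $\Lambda(\Omega,\omega,2)=\{\alpha\in\mathbb{Z}^n:z^\alpha\in L^2(\Omega,\omega dV)\}$, and $\|c_\alpha\|:=1/\|z^\alpha\|_{2,\omega}$. $\Omega$ is feasible with respect to $\omega$ if $\sum_{\alpha\in\Lambda}\|c_\alpha\|^2z^\alpha$ defines an analytic function on $\Omega$ which has an analytic extension to $\widetilde\Omega=\{z\bar w:z,w\in\Omega\}$ (entrywise products). $\mathcal{D}'(\mathbb{T}^n)$ denotes periodic distributions (continuous linear functionals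 on $C^\infty(\mathbb{T}^n)$), with Fourier coefficients $\hat u(\alpha)$, $\alpha\in\mathbb{Z}^n$; $\widehat{u*v}=\hat u\hat v$. For $r\in|\Omega|$, $K_r\in\mathcal{D}'(\mathbb{T}^n)$ is the distribution $\sum_{\alpha\in\Lambda}\|c_\alpha\|^2r^\alpha e^{i\alpha\cdot\theta}$ (converging in $\mathcal{D}'$), so $\hat K_r(\alpha)=\|c_\alpha\|^2r^\alpha$ for $\alpha\in\Lambda$ and $0$ otherwise. A function $g$ on $\Omega$ is induced by $u\in\mathcal{D}'(\mathbb{T}^n)$ if for each $r\in|\Omega|$ the function $g_r(e^{i\theta_1},\dots,e^{i\theta_n}):=g(r_1e^{i\theta_1},\dots,r_ne^{i\theta_n})$ is the sum of the Fourier series of $K_r*u$. *)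

theory Defs
  imports "HOL-Analysis.Analysis"
begin

text \<open>Points of C^n are vectors complex^'n (index type 'n finite, n = CARD('n)).
  Multi-indices in Z^n are functions 'n => int.\<close>

definition torus_act :: "complex^'n \<Rightarrow> complex^'n \<Rightarrow> complex^'n" where
  "torus_act l z = (\<chi> i. l$i * z$i)"

text \<open>Reinhardt domain (open, torus invariant); connectedness is assumed separately.\<close>
definition reinhardt :: "(complex^'n) set \<Rightarrow> bool" where
  "reinhardt \<Omega> \<longleftrightarrow> open \<Omega> \<and>
     (\<forall>z\<in>\<Omega>. \<forall>l::complex^'n. (\<forall>i. norm (l$i) = 1) \<longrightarrow> torus_act l z \<in> \<Omega>)"

definition shadow :: "(complex^'n) set \<Rightarrow> (real^'n) set" where
  "shadow \<Omega> = (\<lambda>z. \<chi> i. norm (z$i)) ` \<Omega>"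

definition mono :: "complex^'n \<Rightarrow> ('n \<Rightarrow> int) \<Rightarrow> complex" where
  "mono z \<alpha> = (\<Prod>i\<in>UNIV. (z$i) powi (\<alpha> i))"

definition analytic_several :: "(complex^'n \<Rightarrow> complex) \<Rightarrow> (complex^'n) set \<Rightarrow> bool" where
  "analytic_several f S \<longleftrightarrow>
     (\<forall>z0\<in>S. \<exists>e>0. ball z0 e \<subseteq> S \<and>
        (\<exists>c::('n \<Rightarrow> nat) \<Rightarrow> complex. \<forall>z\<in>ball z0 e.
            ((\<lambda>\<beta>. c \<beta> * (\<Prod>i\<in>UNIV. (z$i - z0$i) ^ (\<beta> i))) has_sum f z) UNIV))"

definition wnorm2sq :: "(complex^'n \<Rightarrow> real) \<Rightarrow> (complex^'n) set \<Rightarrow> (complex^'n \<Rightarrow> complex) \<Rightarrow> ennreal" where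
  "wnorm2sq \<omega> \<Omega> f = (\<integral>\<^sup>+ z\<in>\<Omega>. ennreal (\<omega> z * (norm (f z))\<^sup>2) \<partial>lebesgue)"

definition in_L2w :: "(complex^'n \<Rightarrow> real) \<Rightarrow> (complex^'n) set \<Rightarrow> (complex^'n \<Rightarrow> complex) \<Rightarrow> bool" where
  "in_L2w \<omega> \<Omega> f \<longleftrightarrow> set_borel_measurable lebesgue \<Omega> f \<and> wnorm2sq \<omega> \<Omega> f < \<infinity>"

definition wnorm :: "(complex^'n \<Rightarrow> real) \<Rightarrow> (complex^'n) set \<Rightarrow> (complex^'n \<Rightarrow> complex) \<Rightarrow> real" where
  "wnorm \<omega> \<Omega> f = sqrt (enn2real (wnorm2sq \<omega> \<Omega> f))"

definition A2 :: "(complex^'n) set \<Rightarrow> (complex^'n \<Rightarrow> real) \<Rightarrow> (complex^'n \<Rightarrow> complex) set" where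
  "A2 \<Omega> \<omega> = {f. analytic_several f \<Omega> \<and> in_L2w \<omega> \<Omega> f}"

definition multi_radial_weight :: "(complex^'n) set \<Rightarrow> (complex^'n \<Rightarrow> real) \<Rightarrow> bool" where
  "multi_radial_weight \<Omega> \<omega> \<longleftrightarrow> \<omega> \<in> borel_measurable lebesgue \<and>
     (AE z\<in>\<Omega> in lebesgue. \<omega> z > 0) \<and>
     (\<exists>a::real^'n \<Rightarrow> real. \<forall>z\<in>\<Omega>. \<omega> z = a (\<chi> i. norm (z$i)))"

definition admissible_weight :: "(complex^'n) set \<Rightarrow> (complex^'n \<Rightarrow> real) \<Rightarrow> bool" where
  "admissible_weight \<Omega> \<omega> \<longleftrightarrow>
     (\<forall>K. compact K \<and> K \<subseteq> \<Omega> \<longrightarrow>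
        (\<exists>C. \<forall>f\<in>A2 \<Omega> \<omega>. \<forall>z\<in>K. norm (f z) \<le> C * wnorm \<omega> \<Omega> f))"

definition Lambda :: "(complex^'n) set \<Rightarrow> (complex^'n \<Rightarrow> real) \<Rightarrow> ('n \<Rightarrow> int) set" where
  "Lambda \<Omega> \<omega> = {\<alpha>. in_L2w \<omega> \<Omega> (\<lambda>z. mono z \<alpha>)}"

definition ccoef_sq :: "(complex^'n) set \<Rightarrow> (complex^'n \<Rightarrow> real) \<Rightarrow> ('n \<Rightarrow> int) \<Rightarrow> real" where
  "ccoef_sq \<Omega> \<omega> \<alpha> = 1 / (wnorm \<omega> \<Omega> (\<lambda>z. mono z \<alpha>))\<^sup>2"

definition tilde :: "(complex^'n) set \<Rightarrow> (complex^'n) set" where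
  "tilde \<Omega> = {(\<chi> i. z$i * cnj (w$i)) | z w. z \<in> \<Omega> \<and> w \<in> \<Omega>}"

definition feasible :: "(complex^'n) set \<Rightarrow> (complex^'n \<Rightarrow> real) \<Rightarrow> bool" where
  "feasible \<Omega> \<omega> \<longleftrightarrow>
     (\<exists>F. (\<forall>z\<in>\<Omega>. ((\<lambda>\<alpha>. complex_of_real (ccoef_sq \<Omega> \<omega> \<alpha>) * mono z \<alpha>) has_sum F z) (Lambda \<Omega> \<omega>))
        \<and> analytic_several F \<Omega>
        \<and> (\<exists>G. analytic_several G (tilde \<Omega>) \<and> (\<forall>z\<in>\<Omega> \<inter> tilde \<Omega>. G z = F z)))"

text \<open>A periodic distribution u on T^n is represented by its Fourier coefficient sequence;
  these are exactly the sequences of at most polynomial growth.\<close>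
definition periodic_distribution_coeffs :: "(('n::finite \<Rightarrow> int) \<Rightarrow> complex) \<Rightarrow> bool" where
  "periodic_distribution_coeffs uh \<longleftrightarrow>
     (\<exists>C N. \<forall>\<alpha>. norm (uh \<alpha>) \<le> C * (1 + real_of_int (\<Sum>i\<in>UNIV. \<bar>\<alpha> i\<bar>)) ^ N)"

text \<open>g is induced by u (given by its Fourier coefficients uh): for each r in |Omega|,
  g(r e^{i theta}) is the sum of the Fourier series of K_r * u, whose alpha-th coefficient is
  ||c_alpha||^2 r^alpha uh(alpha) for alpha in Lambda and 0 otherwise.\<close>
definition induced_by :: "(complex^'n) set \<Rightarrow> (complex^'n \<Rightarrow> real) \<Rightarrow> (complex^'n \<Rightarrow> complex)
     \<Rightarrow> (('n \<Rightarrow> int) \<Rightarrow> complex) \<Rightarrow> bool" where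
  "induced_by \<Omega> \<omega> g uh \<longleftrightarrow>
     (\<forall>r\<in>shadow \<Omega>. \<forall>\<theta>::real^'n.
        ((\<lambda>\<alpha>. complex_of_real (ccoef_sq \<Omega> \<omega> \<alpha>) * complex_of_real (\<Prod>i\<in>UNIV. (r$i) powi (\<alpha> i))
              * uh \<alpha> * exp (\<i> * complex_of_real (\<Sum>i\<in>UNIV. real_of_int (\<alpha> i) * \<theta>$i)))
          has_sum g (\<chi> i. complex_of_real (r$i) * exp (\<i> * complex_of_real (\<theta>$i)))) (Lambda \<Omega> \<omega>))"

end

theory Submission
  imports Defs
begin

(* Around a point z0 of the domain, write z = z0 + h and expand every Laurent monomial z^alpha
   by the binomial series in each coordinate. This is legitimate as long as |h_j| < |z0_j|
   whenever alpha_j < 0, and the absolute sum of the expansion is dominated by the values of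
   |w^alpha| at the 2^n corners w of the polyannulus | |w_j| - |z0_j| | <= delta. Feasibility
   says that the kernel sum_alpha ||c_alpha||^2 w^alpha converges, hence converges absolutely,
   at these corners; since the Fourier coefficients of u are bounded on Lambda, the double
   series of g is absolutely convergent and can be rearranged into a power series in h.
   If z0_j = 0, the exponents alpha_j with ||c_alpha|| > 0 cannot be negative: the kernel is
   analytic, hence bounded near |z0|, while its nonnegative term ||c_alpha||^2 r^alpha would
   blow up as r_j tends to 0. *)

section \<open>Products and rearrangements of absolutely summable families\<close>

lemma has_sum_prod_PiE:
  fixes f :: "'a \<Rightarrow> 'b \<Rightarrow> 'c::{real_normed_field, banach, second_countable_topology}"
  assumes "finite A" and "\<And>x. x \<in> A \<Longrightarrow> countable (B x)"
    and "\<And>x. x \<in> A \<Longrightarrow> (f x has_sum s x) (B x)"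
    and "\<And>x. x \<in> A \<Longrightarrow> (\<lambda>y. norm (f x y)) summable_on B x"
  shows "((\<lambda>g. \<Prod>x\<in>A. f x (g x)) has_sum (\<Prod>x\<in>A. s x)) (PiE A B)"
proof -
  have "Infinite_Set_Sum.abs_summable_on (\<lambda>g. \<Prod>x\<in>A. f x (g x)) (PiE A B)"
  proof (intro abs_summable_on_prod_PiE assms(1,2))
    fix x assume "x \<in> A"
    then show "Infinite_Set_Sum.abs_summable_on (f x) (B x)"
      by (rule abs_summable_equivalent[THEN iffD1, OF assms(4)])
  qed
  then have "(\<lambda>g. norm (\<Prod>x\<in>A. f x (g x))) summable_on PiE A B"
    by (rule abs_summable_equivalent[THEN iffD2])
  then have "((\<lambda>g. \<Prod>x\<in>A. f x (g x)) has_sum (\<Sum>\<^sub>\<infinity>g\<in>PiE A B. \<Prod>x\<in>A. f x (g x))) (PiE A B)"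
    by (rule has_sum_infsum[OF abs_summable_summable])
  also have "(\<Sum>\<^sub>\<infinity>g\<in>PiE A B. \<Prod>x\<in>A. f x (g x)) = (\<Prod>x\<in>A. \<Sum>\<^sub>\<infinity>y\<in>B x. f x y)"
    using assms(1,4) by (rule infsum_prod_PiE_abs)
  also have "\<dots> = (\<Prod>x\<in>A. s x)"
    by (intro prod.cong refl infsumI assms(3))
  finally show ?thesis .
qed

lemma prod_add_if:
  fixes f g :: "'a \<Rightarrow> 'b::comm_semiring_1"
  assumes "finite A"
  shows "(\<Prod>x\<in>A. f x + g x) = (\<Sum>X\<in>Pow A. \<Prod>x\<in>A. if x \<in> X then f x else g x)"
  unfolding prod_add[OF assms]
  by (intro sum.cong refl) (use assms in \<open>auto simp: prod.If_cases Int_absorb1 Diff_eq\<close>)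

lemma summable_on_sum:
  fixes f :: "'i \<Rightarrow> 'a \<Rightarrow> 'b::topological_comm_monoid_add"
  assumes "finite I" and "\<And>i. i \<in> I \<Longrightarrow> f i summable_on A"
  shows "(\<lambda>x. \<Sum>i\<in>I. f i x) summable_on A"
  using assms by (induction I rule: finite_induct) (auto intro: summable_on_add)

lemma has_sum_swap_banach:
  fixes f :: "'a \<Rightarrow> 'b \<Rightarrow> 'c::banach"
  assumes "(\<lambda>(x, y). f x y) summable_on A \<times> B" and "\<And>x. x \<in> A \<Longrightarrow> (f x has_sum r x) B"
  shows "((\<lambda>y. \<Sum>\<^sub>\<infinity>x\<in>A. f x y) has_sum (\<Sum>\<^sub>\<infinity>x\<in>A. r x)) B"
proof -
  have "(\<lambda>(y, x). f x y) summable_on B \<times> A"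
    using summable_on_swap[of "\<lambda>(x, y). f x y" A B] assms(1) by simp
  then have "((\<lambda>y. \<Sum>\<^sub>\<infinity>x\<in>A. f x y) has_sum (\<Sum>\<^sub>\<infinity>y\<in>B. \<Sum>\<^sub>\<infinity>x\<in>A. f x y)) B"
    by (intro has_sum_infsum summable_on_Sigma_banach)
  also have "(\<Sum>\<^sub>\<infinity>y\<in>B. \<Sum>\<^sub>\<infinity>x\<in>A. f x y) = (\<Sum>\<^sub>\<infinity>x\<in>A. \<Sum>\<^sub>\<infinity>y\<in>B. f x y)"
    using assms(1) by (rule infsum_swap_banach[symmetric])
  also have "\<dots> = (\<Sum>\<^sub>\<infinity>x\<in>A. r x)"
    by (intro infsum_cong) (simp add: assms(2)[THEN infsumI])
  finally show ?thesis .
qed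

lemma has_sum_nonneg_term_le:
  fixes f :: "'a \<Rightarrow> real"
  assumes "(f has_sum s) A" and "x \<in> A" and "\<And>y. y \<in> A \<Longrightarrow> f y \<ge> 0"
  shows "f x \<le> s"
proof -
  have "(f has_sum f x) {x}" by (rule has_sum_finiteI) simp_all
  then show ?thesis using assms(1) by (rule has_sum_mono_neutral) (use assms(2,3) in auto)
qed

section \<open>Binomial expansion of integer powers\<close>

definition powi_shift_coeff :: "complex \<Rightarrow> int \<Rightarrow> nat \<Rightarrow> complex" where
  "powi_shift_coeff z0 m k = (of_int m gchoose k) * z0 powi (m - int k)"

lemma has_sum_powi_shift_nonneg:
  assumes "m \<ge> 0"
  shows "((\<lambda>k. powi_shift_coeff z0 m k * h ^ k) has_sum (z0 + h) powi m) UNIV"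
    and "((\<lambda>k. norm (powi_shift_coeff z0 m k * h ^ k)) has_sum (norm z0 + norm h) powi m) UNIV"
proof -
  obtain n where m: "m = int n" using assms nonneg_int_cases by blast
  have coeff: "powi_shift_coeff z0 m k = of_nat (n choose k) * z0 ^ (n - k)" if "k \<le> n" for k
    using that by (simp add: powi_shift_coeff_def m flip: binomial_gbinomial of_nat_diff)
  have vanish: "powi_shift_coeff z0 m k = 0" if "n < k" for k
    using that by (simp add: powi_shift_coeff_def m flip: binomial_gbinomial)
  have "(z0 + h) powi m = (\<Sum>k\<le>n. of_nat (n choose k) * h ^ k * z0 ^ (n - k))"
    using binomial_ring[of h z0 n] by (simp add: m add.commute)
  also have "\<dots> = (\<Sum>k\<le>n. powi_shift_coeff z0 m k * h ^ k)"
    by (intro sum.cong) (simp_all add: coeff)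
  finally show "((\<lambda>k. powi_shift_coeff z0 m k * h ^ k) has_sum (z0 + h) powi m) UNIV"
    by (intro has_sum_finite_neutralI[of "{..n}"]) (auto simp: vanish)
  have "(norm z0 + norm h) powi m = (\<Sum>k\<le>n. of_nat (n choose k) * norm h ^ k * norm z0 ^ (n - k))"
    using binomial_ring[of "norm h" "norm z0" n] by (simp add: m add.commute)
  also have "\<dots> = (\<Sum>k\<le>n. norm (powi_shift_coeff z0 m k * h ^ k))"
    by (intro sum.cong) (simp_all add: coeff norm_mult norm_power)
  finally show "((\<lambda>k. norm (powi_shift_coeff z0 m k * h ^ k)) has_sum (norm z0 + norm h) powi m) UNIV"
    by (intro has_sum_finite_neutralI[of "{..n}"]) (auto simp: vanish)
qed

lemma gchoose_minus_of_nat: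
  assumes "n > 0"
  shows "((- of_nat n :: 'a::field_char_0) gchoose k) = (-1) ^ k * of_nat ((n + k - 1) choose k)"
proof -
  have "(of_nat n + of_nat k - 1 :: 'a) = of_nat (n + k - 1)"
    using assms by simp
  then show ?thesis by (simp add: gbinomial_minus binomial_gbinomial)
qed

lemma norm_gchoose_of_int: "norm ((of_int m :: complex) gchoose k) = \<bar>(of_int m :: real) gchoose k\<bar>"
  unfolding of_int_gbinomial[symmetric] by (rule norm_of_int)

(* For m < 0 the binomial coefficients alternate in sign, so this is the binomial series at -x. *)
lemma sums_abs_gchoose_neg:
  fixes x :: real
  assumes "m < 0" and "0 \<le> x" and "x < 1"
  shows "(\<lambda>k. \<bar>of_int m gchoose k\<bar> * x ^ k) sums (1 - x) powi m"
proof -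
  define n where "n = nat (- m)"
  have n: "n > 0" "m = - int n" using assms(1) by (auto simp: n_def)
  have "\<bar>of_int m gchoose k\<bar> * x ^ k = (of_int m gchoose k) * (- x) ^ k" for k
  proof -
    have "((-1) ^ k * (-1) ^ k :: real) = 1" by (simp flip: power_add)
    then show ?thesis
      using gchoose_minus_of_nat[OF n(1), of k, where 'a = real]
      by (simp add: n(2) abs_mult power_abs power_minus[of x])
  qed
  moreover have "(\<lambda>k. (of_int m gchoose k) * (- x) ^ k) sums (1 - x) powi m"
    using gen_binomial_real[of "- x" "of_int m"] assms by (simp add: powr_real_of_int')
  ultimately show ?thesis by simp
qed

lemma has_sum_powi_shift_neg:
  assumes "m < 0" and "norm h < norm z0"
  shows "((\<lambda>k. powi_shift_coeff z0 m k * h ^ k) has_sum (z0 + h) powi m) UNIV"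
    and "((\<lambda>k. norm (powi_shift_coeff z0 m k * h ^ k)) has_sum (norm z0 - norm h) powi m) UNIV"
proof -
  have z0: "z0 \<noteq> 0" using assms(2) by auto
  define w where "w = h / z0"
  have w: "norm w < 1" using assms(2) z0 by (simp add: w_def norm_divide)
  have term_eq: "powi_shift_coeff z0 m k * h ^ k = z0 powi m * ((of_int m gchoose k) * w ^ k)" for k
    using z0 by (simp add: powi_shift_coeff_def w_def power_int_diff power_divide)
  have "(\<lambda>k. norm z0 powi m * (\<bar>of_int m gchoose k\<bar> * norm w ^ k)) sums (norm z0 powi m * (1 - norm w) powi m)"
    using w by (intro sums_mult sums_abs_gchoose_neg assms(1)) auto
  moreover have "norm z0 * (1 - norm w) = norm z0 - norm h"
    using z0 by (simp add: w_def norm_divide field_simps)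
  ultimately have norm_sums: "(\<lambda>k. norm (powi_shift_coeff z0 m k * h ^ k)) sums (norm z0 - norm h) powi m"
    by (simp add: term_eq norm_mult norm_power norm_power_int norm_gchoose_of_int
        flip: power_int_mult_distrib)
  then show "((\<lambda>k. norm (powi_shift_coeff z0 m k * h ^ k)) has_sum (norm z0 - norm h) powi m) UNIV"
    by (rule sums_nonneg_imp_has_sum) simp
  have "1 + w \<noteq> 0" using w by (auto simp: add_eq_0_iff)
  then have "(\<lambda>k. z0 powi m * ((of_int m gchoose k) * w ^ k)) sums (z0 powi m * (1 + w) powi m)"
    using gen_binomial_complex[of w "of_int m"] w by (intro sums_mult) (simp add: complex_powr_of_int)
  moreover have "z0 * (1 + w) = z0 + h"
    using z0 by (simp add: w_def field_simps)
  ultimately have "(\<lambda>k. powi_shift_coeff z0 m k * h ^ k) sums (z0 + h) powi m"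
    by (simp add: term_eq flip: power_int_mult_distrib)
  then show "((\<lambda>k. powi_shift_coeff z0 m k * h ^ k) has_sum (z0 + h) powi m) UNIV"
    using norm_sums by (intro norm_summable_imp_has_sum) (auto simp: sums_iff)
qed

lemma has_sum_powi_shift:
  assumes "m \<ge> 0 \<or> norm h < norm z0"
  shows "((\<lambda>k. powi_shift_coeff z0 m k * h ^ k) has_sum (z0 + h) powi m) UNIV"
  using assms has_sum_powi_shift_nonneg(1) has_sum_powi_shift_neg(1) by (cases "m \<ge> 0") auto

(* A bound for both signs of m: the first summand dominates for m >= 0, the second for m < 0. *)
lemma powi_shift_norm_summable_bound:
  assumes "norm h \<le> \<delta>" and "m \<ge> 0 \<or> \<delta> < norm z0"
  shows "(\<lambda>k. norm (powi_shift_coeff z0 m k * h ^ k)) summable_on UNIV"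
    and "(\<Sum>\<^sub>\<infinity>k. norm (powi_shift_coeff z0 m k * h ^ k))
           \<le> (norm z0 + \<delta>) powi m + \<bar>norm z0 - \<delta>\<bar> powi m"
proof -
  have "0 \<le> \<delta>" using assms(1) norm_ge_zero order_trans by blast
  then have nonneg: "0 \<le> (norm z0 + \<delta>) powi m" "0 \<le> \<bar>norm z0 - \<delta>\<bar> powi m"
    by simp_all
  obtain s where s: "((\<lambda>k. norm (powi_shift_coeff z0 m k * h ^ k)) has_sum s) UNIV"
    and "s \<le> (norm z0 + \<delta>) powi m + \<bar>norm z0 - \<delta>\<bar> powi m"
  proof (cases "m \<ge> 0")
    case True
    have "(norm z0 + norm h) powi m \<le> (norm z0 + \<delta>) powi m"
      using True assms(1) by (intro power_int_mono) auto
    with that[OF has_sum_powi_shift_nonneg(2)[OF True]] nonneg show ?thesis by linarith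
  next
    case False
    have lt: "norm h < norm z0" using False assms by linarith
    have "(norm z0 - norm h) powi m \<le> (norm z0 - \<delta>) powi m"
      using False assms by (intro power_int_antimono) auto
    moreover have "\<bar>norm z0 - \<delta>\<bar> = norm z0 - \<delta>" using False assms by auto
    ultimately show ?thesis
      using that[OF has_sum_powi_shift_neg(2)[OF _ lt]] False nonneg by simp
  qed
  then show "(\<lambda>k. norm (powi_shift_coeff z0 m k * h ^ k)) summable_on UNIV"
    and "(\<Sum>\<^sub>\<infinity>k. norm (powi_shift_coeff z0 m k * h ^ k))
           \<le> (norm z0 + \<delta>) powi m + \<bar>norm z0 - \<delta>\<bar> powi m"
    by (auto simp: infsumI has_sum_imp_summable)
qed

section \<open>Rearranging Laurent series into power series\<close>

definition monomial_shift_term ::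
    "complex^'n \<Rightarrow> ('n \<Rightarrow> int) \<Rightarrow> complex^'n \<Rightarrow> ('n \<Rightarrow> nat) \<Rightarrow> complex" where
  "monomial_shift_term z0 \<alpha> h \<beta> = (\<Prod>j\<in>UNIV. powi_shift_coeff (z0$j) (\<alpha> j) (\<beta> j) * (h$j) ^ \<beta> j)"

lemma has_sum_monomial_shift:
  assumes "\<And>j. \<alpha> j \<ge> 0 \<or> norm (h$j) < norm (z0$j)"
  shows "(monomial_shift_term z0 \<alpha> h has_sum mono (z0 + h) \<alpha>) UNIV"
proof -
  have "((\<lambda>\<beta>. \<Prod>j\<in>UNIV. powi_shift_coeff (z0$j) (\<alpha> j) (\<beta> j) * (h$j) ^ \<beta> j)
          has_sum (\<Prod>j\<in>UNIV. (z0$j + h$j) powi \<alpha> j)) (PiE UNIV (\<lambda>_. UNIV))"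
  proof (rule has_sum_prod_PiE)
    fix j
    show "((\<lambda>k. powi_shift_coeff (z0$j) (\<alpha> j) k * (h$j) ^ k) has_sum (z0$j + h$j) powi \<alpha> j) UNIV"
      using assms by (rule has_sum_powi_shift)
    show "(\<lambda>k. norm (powi_shift_coeff (z0$j) (\<alpha> j) k * (h$j) ^ k)) summable_on UNIV"
      using powi_shift_norm_summable_bound(1)[of "h$j" "norm (h$j)"] assms by blast
  qed auto
  then show ?thesis
    by (simp add: monomial_shift_term_def[abs_def] mono_def PiE_UNIV_domain)
qed

(* |w^alpha| for the corner w of the polyannulus | |w_j| - |z0_j| | <= delta
   with |w_j| = |z0_j| + delta exactly for j in X. *)
definition corner_monomial :: "complex^'n \<Rightarrow> real \<Rightarrow> 'n set \<Rightarrow> ('n \<Rightarrow> int) \<Rightarrow> real" where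
  "corner_monomial z0 \<delta> X \<alpha> =
     (\<Prod>j\<in>UNIV. (if j \<in> X then norm (z0$j) + \<delta> else \<bar>norm (z0$j) - \<delta>\<bar>) powi \<alpha> j)"

lemma corner_monomial_nonneg: "\<delta> \<ge> 0 \<Longrightarrow> corner_monomial z0 \<delta> X \<alpha> \<ge> 0"
  unfolding corner_monomial_def by (intro prod_nonneg) simp

lemma monomial_shift_norm_summable_bound:
  assumes "\<And>j. norm (h$j) \<le> \<delta>" and "\<And>j. \<alpha> j \<ge> 0 \<or> \<delta> < norm (z0$j)"
  shows "(\<lambda>\<beta>. norm (monomial_shift_term z0 \<alpha> h \<beta>)) summable_on UNIV"
    and "(\<Sum>\<^sub>\<infinity>\<beta>. norm (monomial_shift_term z0 \<alpha> h \<beta>)) \<le>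
      (\<Sum>X\<in>Pow UNIV. corner_monomial z0 \<delta> X \<alpha>)"
proof -
  let ?t = "\<lambda>j k. norm (powi_shift_coeff (z0$j) (\<alpha> j) k * (h$j) ^ k)"
  have "((\<lambda>\<beta>. \<Prod>j\<in>UNIV. ?t j (\<beta> j)) has_sum (\<Prod>j\<in>UNIV. \<Sum>\<^sub>\<infinity>k. ?t j k)) (PiE UNIV (\<lambda>_. UNIV))"
    using powi_shift_norm_summable_bound(1)[OF assms]
    by (intro has_sum_prod_PiE has_sum_infsum) auto
  then have sum: "((\<lambda>\<beta>. norm (monomial_shift_term z0 \<alpha> h \<beta>)) has_sum (\<Prod>j\<in>UNIV. \<Sum>\<^sub>\<infinity>k. ?t j k)) UNIV"
    by (simp add: monomial_shift_term_def PiE_UNIV_domain prod_norm)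
  then show "(\<lambda>\<beta>. norm (monomial_shift_term z0 \<alpha> h \<beta>)) summable_on UNIV"
    by (rule has_sum_imp_summable)
  have "(\<Prod>j\<in>UNIV. \<Sum>\<^sub>\<infinity>k. ?t j k)
      \<le> (\<Prod>j\<in>UNIV. (norm (z0$j) + \<delta>) powi \<alpha> j + \<bar>norm (z0$j) - \<delta>\<bar> powi \<alpha> j)"
    using powi_shift_norm_summable_bound(2)[OF assms] by (intro prod_mono) (auto intro: infsum_nonneg)
  then show "(\<Sum>\<^sub>\<infinity>\<beta>. norm (monomial_shift_term z0 \<alpha> h \<beta>)) \<le>
      (\<Sum>X\<in>Pow UNIV. corner_monomial z0 \<delta> X \<alpha>)"
    by (simp add: infsumI[OF sum] prod_add_if corner_monomial_def if_distrib[of "\<lambda>x. x powi \<alpha> _"])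
qed

lemma laurent_shift_abs_summable:
  fixes a :: "('n::finite \<Rightarrow> int) \<Rightarrow> complex" and z0 h :: "complex^'n"
  assumes exponents: "\<And>\<alpha> j. \<alpha> \<in> S \<Longrightarrow> \<alpha> j \<ge> 0 \<or> \<delta> < norm (z0$j)"
    and corners: "\<And>X. (\<lambda>\<alpha>. norm (a \<alpha>) * corner_monomial z0 \<delta> X \<alpha>) summable_on S"
    and h: "\<And>j. norm (h$j) \<le> \<delta>"
  shows "(\<lambda>(\<alpha>, \<beta>). norm (a \<alpha> * monomial_shift_term z0 \<alpha> h \<beta>)) summable_on S \<times> UNIV"
proof (rule summable_on_SigmaI)
  fix \<alpha> assume "\<alpha> \<in> S"
  show "((\<lambda>\<beta>. case (\<alpha>, \<beta>) of (\<alpha>, \<beta>) \<Rightarrow> norm (a \<alpha> * monomial_shift_term z0 \<alpha> h \<beta>)) has_sum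
      norm (a \<alpha>) * (\<Sum>\<^sub>\<infinity>\<beta>. norm (monomial_shift_term z0 \<alpha> h \<beta>))) UNIV"
    using monomial_shift_norm_summable_bound(1)[OF h exponents[OF \<open>\<alpha> \<in> S\<close>]]
    by (simp add: norm_mult has_sum_cmult_right has_sum_infsum)
next
  show "(\<lambda>\<alpha>. norm (a \<alpha>) * (\<Sum>\<^sub>\<infinity>\<beta>. norm (monomial_shift_term z0 \<alpha> h \<beta>))) summable_on S"
  proof (rule summable_on_comparison_test)
    show "(\<lambda>\<alpha>. \<Sum>X\<in>Pow UNIV. norm (a \<alpha>) * corner_monomial z0 \<delta> X \<alpha>) summable_on S"
      by (intro summable_on_sum corners) simp
    show "norm (a \<alpha>) * (\<Sum>\<^sub>\<infinity>\<beta>. norm (monomial_shift_term z0 \<alpha> h \<beta>))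
        \<le> (\<Sum>X\<in>Pow UNIV. norm (a \<alpha>) * corner_monomial z0 \<delta> X \<alpha>)" if "\<alpha> \<in> S" for \<alpha>
      unfolding sum_distrib_left[symmetric]
      using monomial_shift_norm_summable_bound(2)[OF h exponents[OF that]]
      by (rule mult_left_mono) simp
  qed (simp add: infsum_nonneg)
qed simp

lemma laurent_series_power_series_expansion:
  fixes a :: "('n::finite \<Rightarrow> int) \<Rightarrow> complex" and z0 :: "complex^'n"
  assumes exponents: "\<And>\<alpha> j. \<alpha> \<in> S \<Longrightarrow> \<alpha> j \<ge> 0 \<or> \<delta> < norm (z0$j)"
    and corners: "\<And>X. (\<lambda>\<alpha>. norm (a \<alpha>) * corner_monomial z0 \<delta> X \<alpha>) summable_on S"
  shows "\<exists>c. \<forall>z\<in>ball z0 \<delta>.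
           ((\<lambda>\<beta>. c \<beta> * (\<Prod>j\<in>UNIV. (z$j - z0$j) ^ \<beta> j)) has_sum (\<Sum>\<^sub>\<infinity>\<alpha>\<in>S. a \<alpha> * mono z \<alpha>)) UNIV"
proof (intro exI ballI)
  define c where "c \<beta> = (\<Sum>\<^sub>\<infinity>\<alpha>\<in>S. a \<alpha> * (\<Prod>j\<in>UNIV. powi_shift_coeff (z0$j) (\<alpha> j) (\<beta> j)))" for \<beta>
  fix z assume "z \<in> ball z0 \<delta>"
  define h where "h = z - z0"
  have h: "norm (h$j) < \<delta>" for j
  proof -
    have "norm (h$j) \<le> norm h" by (rule Finite_Cartesian_Product.norm_nth_le)
    then show ?thesis using \<open>z \<in> ball z0 \<delta>\<close> by (simp add: h_def dist_norm norm_minus_commute)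
  qed
  define f where "f = (\<lambda>\<alpha> \<beta>. a \<alpha> * monomial_shift_term z0 \<alpha> h \<beta>)"
  have rows: "(f \<alpha> has_sum a \<alpha> * mono z \<alpha>) UNIV" if "\<alpha> \<in> S" for \<alpha>
  proof -
    have "\<alpha> j \<ge> 0 \<or> norm (h$j) < norm (z0$j)" for j
      using exponents[OF that, of j] h[of j] by linarith
    from has_sum_cmult_right[OF has_sum_monomial_shift[OF this], where c = "a \<alpha>"] show ?thesis
      by (simp add: f_def h_def)
  qed
  have "(\<lambda>(\<alpha>, \<beta>). norm (f \<alpha> \<beta>)) summable_on S \<times> UNIV"
    unfolding f_def
    by (rule laurent_shift_abs_summable[of S \<delta> z0 a h]) (use exponents corners h in \<open>auto simp: less_imp_le\<close>)
  then have summable: "(\<lambda>(\<alpha>, \<beta>). f \<alpha> \<beta>) summable_on S \<times> UNIV"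
    using abs_summable_summable[of "\<lambda>(\<alpha>, \<beta>). f \<alpha> \<beta>"] by (simp add: case_prod_unfold)
  have columns: "(\<Sum>\<^sub>\<infinity>\<alpha>\<in>S. f \<alpha> \<beta>) = c \<beta> * (\<Prod>j\<in>UNIV. (z$j - z0$j) ^ \<beta> j)" for \<beta>
  proof -
    have "f \<alpha> \<beta> = a \<alpha> * (\<Prod>j\<in>UNIV. powi_shift_coeff (z0$j) (\<alpha> j) (\<beta> j))
        * (\<Prod>j\<in>UNIV. (z$j - z0$j) ^ \<beta> j)" for \<alpha>
      by (simp add: f_def monomial_shift_term_def prod.distrib h_def)
    then show ?thesis by (simp add: c_def infsum_cmult_left')
  qed
  from has_sum_swap_banach[OF summable rows] show "((\<lambda>\<beta>. c \<beta> * (\<Prod>j\<in>UNIV. (z$j - z0$j) ^ \<beta> j))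
      has_sum (\<Sum>\<^sub>\<infinity>\<alpha>\<in>S. a \<alpha> * mono z \<alpha>)) UNIV"
    by (simp only: columns)
qed

section \<open>Feasible Reinhardt domains\<close>

lemma reinhardt_mem_same_moduli:
  fixes \<Omega> :: "(complex^'n) set"
  assumes "reinhardt \<Omega>" and "z \<in> \<Omega>" and "\<And>j. norm (w$j) = norm (z$j)"
  shows "w \<in> \<Omega>"
proof -
  define l :: "complex^'n" where "l = (\<chi> j. if z$j = 0 then 1 else w$j / z$j)"
  have "norm (l$j) = 1" for j
    using assms(3)[of j] by (cases "z$j = 0") (auto simp: l_def norm_divide)
  moreover have "l$j * z$j = w$j" for j
    using assms(3)[of j] by (cases "z$j = 0") (auto simp: l_def)
  then have "torus_act l z = w"
    by (simp add: torus_act_def vec_eq_iff)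
  ultimately show ?thesis
    using assms(1,2) unfolding reinhardt_def by metis
qed

lemma mem_ball_if_components_close:
  fixes w p :: "complex^'n"
  assumes "\<And>j. norm (w$j - p$j) \<le> \<eta>" and "real CARD('n) * \<eta> < e"
  shows "w \<in> ball p e"
proof -
  have "dist p w = norm (w - p)" by (simp add: dist_norm norm_minus_commute)
  also have "\<dots> \<le> (\<Sum>j\<in>UNIV. norm ((w - p)$j))"
    unfolding norm_vec_def by (rule L2_set_le_sum) simp
  also have "\<dots> \<le> real CARD('n) * \<eta>"
    using sum_mono[of UNIV "\<lambda>j. norm ((w - p)$j)" "\<lambda>_. \<eta>"] assms(1) by simp
  finally show ?thesis using assms(2) by simp
qed

lemma norm_power_series_le:
  fixes d :: "('n::finite \<Rightarrow> nat) \<Rightarrow> complex" and p w :: "complex^'n"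
  assumes "((\<lambda>\<beta>. d \<beta> * (\<Prod>j\<in>UNIV. (w$j - p$j) ^ \<beta> j)) has_sum s) UNIV"
    and "(\<lambda>\<beta>. d \<beta> * (\<Prod>j\<in>UNIV. of_real \<eta> ^ \<beta> j)) summable_on UNIV"
    and "\<And>j. norm (w$j - p$j) \<le> \<eta>"
  shows "norm s \<le> (\<Sum>\<^sub>\<infinity>\<beta>. norm (d \<beta> * (\<Prod>j\<in>UNIV. of_real \<eta> ^ \<beta> j)))"
proof -
  define t where "t = (\<lambda>\<beta>. d \<beta> * (\<Prod>j\<in>UNIV. complex_of_real \<eta> ^ \<beta> j))"
  define tw where "tw = (\<lambda>\<beta>. d \<beta> * (\<Prod>j\<in>UNIV. (w$j - p$j) ^ \<beta> j))"
  have "0 \<le> \<eta>" using assms(3) norm_ge_zero order_trans by blast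
  have t: "(\<lambda>\<beta>. norm (t \<beta>)) summable_on UNIV"
    using assms(2) by (simp add: t_def summable_on_iff_abs_summable_on_complex)
  have le: "norm (tw \<beta>) \<le> norm (t \<beta>)" for \<beta>
  proof -
    have "(\<Prod>j\<in>UNIV. norm (w$j - p$j) ^ \<beta> j) \<le> (\<Prod>j\<in>UNIV. \<eta> ^ \<beta> j)"
      by (intro prod_mono conjI power_mono assms(3)) simp_all
    then show ?thesis using \<open>0 \<le> \<eta>\<close>
      by (simp add: tw_def t_def norm_mult norm_power mult_left_mono flip: prod_norm)
  qed
  have tw: "(\<lambda>\<beta>. norm (tw \<beta>)) summable_on UNIV"
    by (rule Infinite_Sum.abs_summable_on_comparison_test[OF t]) (simp add: le)
  have "s = (\<Sum>\<^sub>\<infinity>\<beta>. tw \<beta>)"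
    using assms(1) by (simp add: tw_def infsumI)
  also have "norm \<dots> \<le> (\<Sum>\<^sub>\<infinity>\<beta>. norm (tw \<beta>))" by (rule norm_infsum_bound[OF tw])
  also have "\<dots> \<le> (\<Sum>\<^sub>\<infinity>\<beta>. norm (t \<beta>))" by (rule infsum_mono[OF tw t le])
  finally show ?thesis by (simp add: t_def)
qed

lemma analytic_several_locally_bounded:
  fixes F :: "complex^'n \<Rightarrow> complex"
  assumes "analytic_several F \<Omega>" and "p \<in> \<Omega>"
  obtains \<eta> B where "\<eta> > 0"
    and "\<And>w. (\<And>j. norm (w$j - p$j) \<le> \<eta>) \<Longrightarrow> w \<in> \<Omega> \<and> norm (F w) \<le> B"
proof -
  have "\<exists>e>0. ball p e \<subseteq> \<Omega> \<and> (\<exists>d. \<forall>w\<in>ball p e.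
          ((\<lambda>\<beta>. d \<beta> * (\<Prod>j\<in>UNIV. (w$j - p$j) ^ \<beta> j)) has_sum F w) UNIV)"
    using assms unfolding analytic_several_def by blast
  then obtain e d where "e > 0" and ball: "ball p e \<subseteq> \<Omega>"
    and d: "\<And>w. w \<in> ball p e \<Longrightarrow>
              ((\<lambda>\<beta>. d \<beta> * (\<Prod>j\<in>UNIV. (w$j - p$j) ^ \<beta> j)) has_sum F w) UNIV"
    by blast
  define \<eta> where "\<eta> = e / (2 * real CARD('n))"
  have \<eta>: "\<eta> > 0" "real CARD('n) * \<eta> < e" using \<open>e > 0\<close> by (auto simp: \<eta>_def)
  have "(\<chi> j. p$j + of_real \<eta>) \<in> ball p e"
    by (rule mem_ball_if_components_close[OF _ \<eta>(2)]) (use \<eta>(1) in simp)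
  from has_sum_imp_summable[OF d[OF this]]
  have summable: "(\<lambda>\<beta>. d \<beta> * (\<Prod>j\<in>UNIV. of_real \<eta> ^ \<beta> j)) summable_on UNIV"
    by simp
  show ?thesis
  proof (rule that[OF \<eta>(1)])
    fix w assume w: "\<And>j. norm (w$j - p$j) \<le> \<eta>"
    then have "w \<in> ball p e" by (rule mem_ball_if_components_close[OF _ \<eta>(2)])
    with ball d norm_power_series_le[OF _ summable w]
    show "w \<in> \<Omega> \<and> norm (F w) \<le> (\<Sum>\<^sub>\<infinity>\<beta>. norm (d \<beta> * (\<Prod>j\<in>UNIV. of_real \<eta> ^ \<beta> j)))"
      by blast
  qed
qed

lemma nonneg_exponent_if_powi_bounded:
  fixes m :: int and C \<eta> B :: real
  assumes "C > 0" and "\<eta> > 0" and bounded: "\<And>t. 0 < t \<Longrightarrow> t \<le> \<eta> \<Longrightarrow> C * t powi m \<le> B"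
  shows "m \<ge> 0"
proof (rule ccontr)
  assume "\<not> m \<ge> 0"
  have "0 < C * \<eta> powi m" using assms(1,2) by (intro mult_pos_pos zero_less_power_int)
  also have "\<dots> \<le> B" using bounded[OF assms(2)] by simp
  finally have "B > 0" .
  define t where "t = min (min \<eta> 1) (C / (B + 1))"
  have t: "0 < t" "t \<le> \<eta>" "t \<le> 1" "t \<le> C / (B + 1)"
    using assms(1,2) \<open>B > 0\<close> by (auto simp: t_def)
  have "B + 1 \<le> C / t"
    using t \<open>B > 0\<close> assms(1) by (simp add: field_simps)
  also have "C / t = C * t powi (-1)" by (simp add: power_int_minus divide_inverse)
  also have "\<dots> \<le> C * t powi m"
    using t assms(1) \<open>\<not> m \<ge> 0\<close> by (intro mult_left_mono power_int_decreasing) auto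
  also have "\<dots> \<le> B" using bounded[OF t(1,2)] .
  finally show False by simp
qed

lemma ccoef_sq_nonneg: "ccoef_sq \<Omega> \<omega> \<alpha> \<ge> 0"
  by (simp add: ccoef_sq_def)

definition kernel_support :: "(complex^'n) set \<Rightarrow> (complex^'n \<Rightarrow> real) \<Rightarrow> ('n \<Rightarrow> int) set" where
  "kernel_support \<Omega> \<omega> = {\<alpha> \<in> Lambda \<Omega> \<omega>. ccoef_sq \<Omega> \<omega> \<alpha> \<noteq> 0}"

lemma mono_of_real: "mono (\<chi> j. complex_of_real (r j)) \<alpha> = of_real (\<Prod>j\<in>UNIV. r j powi \<alpha> j)"
  by (simp add: mono_def)

lemma mono_polar:
  "mono (\<chi> j. of_real (r$j) * exp (\<i> * of_real (\<theta>$j))) \<alpha>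
     = of_real (\<Prod>j\<in>UNIV. r$j powi \<alpha> j) * exp (\<i> * of_real (\<Sum>j\<in>UNIV. of_int (\<alpha> j) * \<theta>$j))"
proof -
  have "\<i> * of_real (\<Sum>j\<in>UNIV. of_int (\<alpha> j) * \<theta>$j) = (\<Sum>j\<in>UNIV. of_int (\<alpha> j) * (\<i> * of_real (\<theta>$j)))"
    by (simp add: sum_distrib_left mult_ac)
  then show ?thesis
    by (simp add: mono_def power_int_mult_distrib prod.distrib exp_sum exp_power_int)
qed

lemma polar_decomposition_vec: "(\<chi> j. of_real (norm (z$j)) * exp (\<i> * of_real (Arg (z$j)))) = z"
proof -
  have "of_real (norm c) * exp (\<i> * of_real (Arg c)) = c" for c :: complex
    by (cases "c = 0") (use Arg_eq[of c] in auto)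
  then show ?thesis by (simp add: vec_eq_iff)
qed

lemma induced_by_has_sum:
  assumes "induced_by \<Omega> \<omega> g uh" and "z \<in> \<Omega>"
  shows "((\<lambda>\<alpha>. of_real (ccoef_sq \<Omega> \<omega> \<alpha>) * uh \<alpha> * mono z \<alpha>) has_sum g z) (kernel_support \<Omega> \<omega>)"
proof -
  define r where "r = (\<chi> j. norm (z$j))"
  define \<theta> where "\<theta> = (\<chi> j. Arg (z$j))"
  have "r \<in> shadow \<Omega>" using assms(2) by (auto simp: shadow_def r_def)
  then have "((\<lambda>\<alpha>. of_real (ccoef_sq \<Omega> \<omega> \<alpha>) * of_real (\<Prod>j\<in>UNIV. r$j powi \<alpha> j) * uh \<alpha>
        * exp (\<i> * of_real (\<Sum>j\<in>UNIV. of_int (\<alpha> j) * \<theta>$j)))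
      has_sum g (\<chi> j. of_real (r$j) * exp (\<i> * of_real (\<theta>$j)))) (Lambda \<Omega> \<omega>)"
    using assms(1) unfolding induced_by_def by blast
  moreover have "(\<chi> j. of_real (r$j) * exp (\<i> * of_real (\<theta>$j))) = z"
    unfolding r_def \<theta>_def by (simp add: polar_decomposition_vec)
  ultimately have "((\<lambda>\<alpha>. of_real (ccoef_sq \<Omega> \<omega> \<alpha>) * uh \<alpha> * mono z \<alpha>) has_sum g z) (Lambda \<Omega> \<omega>)"
    using mono_polar[of r \<theta>] by (simp add: mult_ac)
  then show ?thesis
    by (rule has_sum_cong_neutral[THEN iffD1, rotated -1]) (auto simp: kernel_support_def)
qed

lemma feasible_kernel_abs_summable:
  assumes "feasible \<Omega> \<omega>" and "w \<in> \<Omega>"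
  shows "(\<lambda>\<alpha>. ccoef_sq \<Omega> \<omega> \<alpha> * (\<Prod>j\<in>UNIV. norm (w$j) powi \<alpha> j)) summable_on Lambda \<Omega> \<omega>"
proof -
  obtain F where "((\<lambda>\<alpha>. of_real (ccoef_sq \<Omega> \<omega> \<alpha>) * mono w \<alpha>) has_sum F) (Lambda \<Omega> \<omega>)"
    using assms unfolding feasible_def by blast
  then have "(\<lambda>\<alpha>. norm (of_real (ccoef_sq \<Omega> \<omega> \<alpha>) * mono w \<alpha>)) summable_on Lambda \<Omega> \<omega>"
    by (rule summable_on_iff_abs_summable_on_complex[THEN iffD1, OF has_sum_imp_summable])
  then show ?thesis
    by (simp add: norm_mult mono_def norm_power_int ccoef_sq_nonneg flip: prod_norm)
qed

lemma kernel_term_le_norm: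
  assumes "((\<lambda>\<beta>. of_real (ccoef_sq \<Omega> \<omega> \<beta>) * mono (\<chi> j. of_real (r j)) \<beta>) has_sum s) (Lambda \<Omega> \<omega>)"
    and "\<alpha> \<in> Lambda \<Omega> \<omega>" and "\<And>j. r j > 0"
  shows "ccoef_sq \<Omega> \<omega> \<alpha> * (\<Prod>j\<in>UNIV. r j powi \<alpha> j) \<le> norm s"
proof -
  have "((\<lambda>\<beta>. ccoef_sq \<Omega> \<omega> \<beta> * (\<Prod>j\<in>UNIV. r j powi \<beta> j)) has_sum Re s) (Lambda \<Omega> \<omega>)"
    using has_sum_Re[OF assms(1)] unfolding mono_of_real of_real_mult[symmetric] Re_complex_of_real .
  then have "ccoef_sq \<Omega> \<omega> \<alpha> * (\<Prod>j\<in>UNIV. r j powi \<alpha> j) \<le> Re s"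
  proof (rule has_sum_nonneg_term_le[OF _ assms(2)])
    show "0 \<le> ccoef_sq \<Omega> \<omega> \<beta> * (\<Prod>j\<in>UNIV. r j powi \<beta> j)" for \<beta>
      using assms(3) by (intro mult_nonneg_nonneg prod_nonneg ccoef_sq_nonneg) (simp add: less_imp_le)
  qed
  then show ?thesis using complex_Re_le_cmod order_trans by blast
qed

lemma feasible_exponent_nonneg:
  fixes \<Omega> :: "(complex^'n) set"
  assumes "reinhardt \<Omega>" and "feasible \<Omega> \<omega>" and "\<alpha> \<in> kernel_support \<Omega> \<omega>"
    and "z0 \<in> \<Omega>" and "z0$i = 0"
  shows "\<alpha> i \<ge> 0"
proof -
  have \<alpha>: "\<alpha> \<in> Lambda \<Omega> \<omega>" "ccoef_sq \<Omega> \<omega> \<alpha> \<noteq> 0"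
    using assms(3) by (auto simp: kernel_support_def)
  obtain F where F: "\<And>z. z \<in> \<Omega> \<Longrightarrow>
      ((\<lambda>\<beta>. of_real (ccoef_sq \<Omega> \<omega> \<beta>) * mono z \<beta>) has_sum F z) (Lambda \<Omega> \<omega>)"
    and "analytic_several F \<Omega>"
    using assms(2) unfolding feasible_def by blast
  define p :: "complex^'n" where "p = (\<chi> j. of_real (norm (z0$j)))"
  have "p \<in> \<Omega>" by (rule reinhardt_mem_same_moduli[OF assms(1,4)]) (simp add: p_def)
  then obtain \<eta> B where "\<eta> > 0"
    and bound: "\<And>w. (\<And>j. norm (w$j - p$j) \<le> \<eta>) \<Longrightarrow> w \<in> \<Omega> \<and> norm (F w) \<le> B"
    using analytic_several_locally_bounded[OF \<open>analytic_several F \<Omega>\<close>] by metis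
  define K where "K = (\<Prod>j\<in>UNIV-{i}. (norm (z0$j) + \<eta>) powi \<alpha> j)"
  have "ccoef_sq \<Omega> \<omega> \<alpha> * K * t powi \<alpha> i \<le> B" if "0 < t" "t \<le> \<eta>" for t
  proof -
    define r where "r = (\<lambda>j. if j = i then t else norm (z0$j) + \<eta>)"
    have r: "r j > 0" for j using that \<open>\<eta> > 0\<close> by (simp add: r_def add_nonneg_pos)
    define w :: "complex^'n" where "w = (\<chi> j. of_real (r j))"
    have "norm (w$j - p$j) \<le> \<eta>" for j
      using that assms(5) by (auto simp: w_def p_def r_def)
    then have "w \<in> \<Omega>" and "norm (F w) \<le> B" using bound by auto
    have "ccoef_sq \<Omega> \<omega> \<alpha> * (\<Prod>j\<in>UNIV. r j powi \<alpha> j) \<le> norm (F w)"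
      using F[OF \<open>w \<in> \<Omega>\<close>] \<alpha>(1) r unfolding w_def by (rule kernel_term_le_norm)
    also have "\<dots> \<le> B" by fact
    finally have "ccoef_sq \<Omega> \<omega> \<alpha> * (\<Prod>j\<in>UNIV. r j powi \<alpha> j) \<le> B" .
    moreover have "(\<Prod>j\<in>UNIV-{i}. r j powi \<alpha> j) = K"
      unfolding K_def by (rule prod.cong) (auto simp: r_def)
    ultimately show ?thesis
      by (simp add: prod.remove[of UNIV i] r_def mult_ac)
  qed
  moreover have "ccoef_sq \<Omega> \<omega> \<alpha> * K > 0"
    using \<alpha>(2) ccoef_sq_nonneg[of \<Omega> \<omega> \<alpha>] \<open>\<eta> > 0\<close>
    by (auto simp: K_def intro!: mult_pos_pos prod_pos zero_less_power_int add_nonneg_pos)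
  ultimately show ?thesis
    using \<open>\<eta> > 0\<close>
    by (intro nonneg_exponent_if_powi_bounded[where C = "ccoef_sq \<Omega> \<omega> \<alpha> * K" and \<eta> = \<eta> and B = B])
      auto
qed

lemma feasible_expansion_radius:
  fixes \<Omega> :: "(complex^'n) set"
  assumes "reinhardt \<Omega>" and "feasible \<Omega> \<omega>" and "z0 \<in> \<Omega>"
  obtains \<delta> where "\<delta> > 0" and "ball z0 \<delta> \<subseteq> \<Omega>"
    and "\<And>\<alpha> j. \<alpha> \<in> kernel_support \<Omega> \<omega> \<Longrightarrow> \<alpha> j \<ge> 0 \<or> \<delta> < norm (z0$j)"
    and "\<And>X. (\<lambda>\<alpha>. ccoef_sq \<Omega> \<omega> \<alpha> * corner_monomial z0 \<delta> X \<alpha>) summable_on Lambda \<Omega> \<omega>"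
proof -
  define p :: "complex^'n" where "p = (\<chi> j. of_real (norm (z0$j)))"
  have "p \<in> \<Omega>" by (rule reinhardt_mem_same_moduli[OF assms(1,3)]) (simp add: p_def)
  have "open \<Omega>" using assms(1) by (simp add: reinhardt_def)
  then obtain \<epsilon> \<epsilon>0 where "\<epsilon> > 0" "ball p \<epsilon> \<subseteq> \<Omega>" "\<epsilon>0 > 0" "ball z0 \<epsilon>0 \<subseteq> \<Omega>"
    using \<open>p \<in> \<Omega>\<close> assms(3) by (meson open_contains_ball)
  define R where "R = insert (min \<epsilon>0 (\<epsilon> / (2 * real CARD('n)))) {norm (z0$j) | j. z0$j \<noteq> 0}"
  have R: "finite R" "R \<noteq> {}" "\<And>x. x \<in> R \<Longrightarrow> x > 0"
    using \<open>\<epsilon> > 0\<close> \<open>\<epsilon>0 > 0\<close> by (auto simp: R_def)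
  define \<delta> where "\<delta> = Min R / 2"
  have "\<delta> > 0" using R by (simp add: \<delta>_def)
  have \<delta>_less: "\<delta> < x" if "x \<in> R" for x
    using Min_le[OF R(1) that] R(3)[OF that] by (simp add: \<delta>_def)
  show ?thesis
  proof
    show "\<delta> > 0" by fact
    show "ball z0 \<delta> \<subseteq> \<Omega>"
      using \<delta>_less[of "min \<epsilon>0 (\<epsilon> / (2 * real CARD('n)))"] \<open>ball z0 \<epsilon>0 \<subseteq> \<Omega>\<close> by (auto simp: R_def)
    show "\<alpha> j \<ge> 0 \<or> \<delta> < norm (z0$j)" if "\<alpha> \<in> kernel_support \<Omega> \<omega>" for \<alpha> j
      using feasible_exponent_nonneg[OF assms(1,2) that assms(3)] \<delta>_less[of "norm (z0$j)"]
      by (cases "z0$j = 0") (auto simp: R_def)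
    fix X
    define w :: "complex^'n"
      where "w = (\<chi> j. of_real (if j \<in> X then norm (z0$j) + \<delta> else norm (z0$j) - \<delta>))"
    have "real CARD('n) * \<delta> < \<epsilon>"
      using \<delta>_less[of "min \<epsilon>0 (\<epsilon> / (2 * real CARD('n)))"] \<open>\<epsilon> > 0\<close> by (auto simp: R_def field_simps)
    then have "w \<in> ball p \<epsilon>"
      using \<open>\<delta> > 0\<close> by (intro mem_ball_if_components_close[where \<eta> = \<delta>]) (auto simp: w_def p_def)
    then have "w \<in> \<Omega>" using \<open>ball p \<epsilon> \<subseteq> \<Omega>\<close> by blast
    have "norm (w$j) = (if j \<in> X then norm (z0$j) + \<delta> else \<bar>norm (z0$j) - \<delta>\<bar>)" for j
      using \<open>\<delta> > 0\<close> by (simp add: w_def)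
    then show "(\<lambda>\<alpha>. ccoef_sq \<Omega> \<omega> \<alpha> * corner_monomial z0 \<delta> X \<alpha>) summable_on Lambda \<Omega> \<omega>"
      using feasible_kernel_abs_summable[OF assms(2) \<open>w \<in> \<Omega>\<close>] by (simp add: corner_monomial_def)
  qed
qed

lemma bounded_coeffs_corner_summable:
  fixes uh :: "('n::finite \<Rightarrow> int) \<Rightarrow> complex"
  assumes "\<And>\<alpha>. \<alpha> \<in> Lambda \<Omega> \<omega> \<Longrightarrow> norm (uh \<alpha>) \<le> M" and "\<delta> \<ge> 0"
    and "(\<lambda>\<alpha>. ccoef_sq \<Omega> \<omega> \<alpha> * corner_monomial z0 \<delta> X \<alpha>) summable_on Lambda \<Omega> \<omega>"
  shows "(\<lambda>\<alpha>. norm (of_real (ccoef_sq \<Omega> \<omega> \<alpha>) * uh \<alpha>) * corner_monomial z0 \<delta> X \<alpha>)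
           summable_on kernel_support \<Omega> \<omega>"
proof (rule summable_on_comparison_test)
  have "(\<lambda>\<alpha>. ccoef_sq \<Omega> \<omega> \<alpha> * corner_monomial z0 \<delta> X \<alpha>) summable_on kernel_support \<Omega> \<omega>"
    using assms(3) by (rule summable_on_subset_banach) (auto simp: kernel_support_def)
  then show "(\<lambda>\<alpha>. M * (ccoef_sq \<Omega> \<omega> \<alpha> * corner_monomial z0 \<delta> X \<alpha>)) summable_on kernel_support \<Omega> \<omega>"
    by (rule summable_on_cmult_right)
  fix \<alpha> assume "\<alpha> \<in> kernel_support \<Omega> \<omega>"
  then have "norm (uh \<alpha>) * ccoef_sq \<Omega> \<omega> \<alpha> \<le> M * ccoef_sq \<Omega> \<omega> \<alpha>"
    using assms(1) ccoef_sq_nonneg by (intro mult_right_mono) (auto simp: kernel_support_def)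
  then have "norm (of_real (ccoef_sq \<Omega> \<omega> \<alpha>) * uh \<alpha>) \<le> M * ccoef_sq \<Omega> \<omega> \<alpha>"
    using ccoef_sq_nonneg[of \<Omega> \<omega> \<alpha>] by (simp add: norm_mult mult.commute)
  with corner_monomial_nonneg[OF assms(2), of z0 X \<alpha>]
  show "norm (of_real (ccoef_sq \<Omega> \<omega> \<alpha>) * uh \<alpha>) * corner_monomial z0 \<delta> X \<alpha>
      \<le> M * (ccoef_sq \<Omega> \<omega> \<alpha> * corner_monomial z0 \<delta> X \<alpha>)"
    and "0 \<le> norm (of_real (ccoef_sq \<Omega> \<omega> \<alpha>) * uh \<alpha>) * corner_monomial z0 \<delta> X \<alpha>"
    by (simp_all add: mult.assoc[symmetric] mult_right_mono)
qed

theorem lemma3p9: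
  fixes \<Omega> :: "(complex^'n) set" and \<omega> :: "complex^'n \<Rightarrow> real"
    and uh :: "('n \<Rightarrow> int) \<Rightarrow> complex" and g :: "complex^'n \<Rightarrow> complex"
  assumes "bounded \<Omega>" and "connected \<Omega>" and "reinhardt \<Omega>"
    and "multi_radial_weight \<Omega> \<omega>" and "admissible_weight \<Omega> \<omega>"
    and "feasible \<Omega> \<omega>"
    and "periodic_distribution_coeffs uh"
    and "\<exists>M. \<forall>\<alpha>\<in>Lambda \<Omega> \<omega>. norm (uh \<alpha>) \<le> M"
    and "induced_by \<Omega> \<omega> g uh"
  shows "analytic_several g \<Omega>"
  unfolding analytic_several_def
proof
  fix z0 assume "z0 \<in> \<Omega>"
  obtain M where M: "\<And>\<alpha>. \<alpha> \<in> Lambda \<Omega> \<omega> \<Longrightarrow> norm (uh \<alpha>) \<le> M" using assms(8) by blast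
  obtain \<delta> where "\<delta> > 0" and ball: "ball z0 \<delta> \<subseteq> \<Omega>"
    and exponents: "\<And>\<alpha> j. \<alpha> \<in> kernel_support \<Omega> \<omega> \<Longrightarrow> \<alpha> j \<ge> 0 \<or> \<delta> < norm (z0$j)"
    and corners: "\<And>X. (\<lambda>\<alpha>. ccoef_sq \<Omega> \<omega> \<alpha> * corner_monomial z0 \<delta> X \<alpha>) summable_on Lambda \<Omega> \<omega>"
    by (rule feasible_expansion_radius[OF assms(3,6) \<open>z0 \<in> \<Omega>\<close>]) (rule that)
  have "\<exists>c. \<forall>z\<in>ball z0 \<delta>. ((\<lambda>\<beta>. c \<beta> * (\<Prod>j\<in>UNIV. (z$j - z0$j) ^ \<beta> j)) has_sum
      (\<Sum>\<^sub>\<infinity>\<alpha>\<in>kernel_support \<Omega> \<omega>. of_real (ccoef_sq \<Omega> \<omega> \<alpha>) * uh \<alpha> * mono z \<alpha>)) UNIV"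
    using exponents bounded_coeffs_corner_summable[OF M less_imp_le[OF \<open>\<delta> > 0\<close>] corners]
    by (rule laurent_series_power_series_expansion)
  then obtain c where c: "\<And>z. z \<in> ball z0 \<delta> \<Longrightarrow> ((\<lambda>\<beta>. c \<beta> * (\<Prod>j\<in>UNIV. (z$j - z0$j) ^ \<beta> j)) has_sum
      (\<Sum>\<^sub>\<infinity>\<alpha>\<in>kernel_support \<Omega> \<omega>. of_real (ccoef_sq \<Omega> \<omega> \<alpha>) * uh \<alpha> * mono z \<alpha>)) UNIV"
    by blast
  have "g z = (\<Sum>\<^sub>\<infinity>\<alpha>\<in>kernel_support \<Omega> \<omega>. of_real (ccoef_sq \<Omega> \<omega> \<alpha>) * uh \<alpha> * mono z \<alpha>)"
    if "z \<in> \<Omega>" for z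
    using induced_by_has_sum[OF assms(9) that] by (rule infsumI[symmetric])
  with c ball \<open>\<delta> > 0\<close> show "\<exists>e>0. ball z0 e \<subseteq> \<Omega> \<and> (\<exists>c. \<forall>z\<in>ball z0 e.
      ((\<lambda>\<beta>. c \<beta> * (\<Prod>i\<in>UNIV. (z$i - z0$i) ^ \<beta> i)) has_sum g z) UNIV)"
    by (intro exI[of _ \<delta>] exI[of _ c] conjI ballI) auto
qed

end
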